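(* Let $n\ge2$, $N\ge2n+1$, $\alpha_2,\dots,\alpha_n$ real, $\alpha_1=1$. Consider the closed ($k=1$) $N$-dimensional metric $ds^2=-dt^2+a(t)^2\left(\frac{dr^2}{1-r^2}+r^2d\Omega_{N-2}^2\right)$ and the pressure component of the Lovelock field equations with $p=0$, namely $$-(N-2)\left(\frac{N-3}{2}\Big(\frac{\dot a^2}{a^2}+\frac{1}{a^2}\Big)+\frac{\ddot a}{a}\right)+\sum_{i=2}^{n}\alpha_i\left[{}^{(i)}k_{11}\Big(\frac{\dot a^2}{a^2}+\frac{1}{a^2}\Big)^i+{}^{(i)}k_{12}\,\frac{\ddot a}{a}\Big(\frac{\dot a^2}{a^2}+\frac{1}{a^2}\Big)^{i-1}\right]=0 .$$ Let $C_1>0$ be a positive real root of $2-N+\sum_{i=2}^n\alpha_i\,{}^{(i)}k_{12}\,\frac{C_1^{i-1}}{i}=0$. Then $$a(t)=\frac{1}{\sqrt{C_1}}\cosh\big(\sqrt{C_1}\,t\big)$$ is a solution of this pressure-free equation.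
   Context: Dots denote $d/dt$ ($t$ cosmic time). This equation is the spatial ($p$) component of the Lovelock field equations $\sum_i\alpha_i\,{}^{(i)}\mathcal{H}^a_{\ b}=T^a_{\ b}$ for a perfect fluid in the FRW metric. Coefficients (binomial coefficients $\binom{a}{b}$, zero when $b<0$): ${}^{(i)}k_{11}=-\tfrac12(2(i-1))!\,(N-2)(N-1-2i)\binom{N-3}{2(i-1)}$, ${}^{(i)}k_{12}=-\tfrac12(2(i-1))!\left[2(N-i-1)\binom{N-2}{2(i-1)}+(N-2)(N-1-2i)\binom{N-3}{2i-3}\right]$. *)

theory Defs
  imports "HOL-Analysis.Analysis"
begin

definition binom :: "int \<Rightarrow> int \<Rightarrow> real" where
  "binom a b = (if b < 0 then 0 else (of_int a) gchoose (nat b))"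

definition lk11 :: "nat \<Rightarrow> nat \<Rightarrow> real" where
  "lk11 N i = - (1/2) * fact (2*(i-1)) * (real N - 2) * (real N - 1 - 2 * real i)
      * binom (int N - 3) (2 * (int i - 1))"

definition lk12 :: "nat \<Rightarrow> nat \<Rightarrow> real" where
  "lk12 N i = - (1/2) * fact (2*(i-1)) *
     (2 * (real N - real i - 1) * binom (int N - 2) (2 * (int i - 1))
      + (real N - 2) * (real N - 1 - 2 * real i) * binom (int N - 3) (2 * int i - 3))"

text \<open>Left-hand side of the pressure-free spatial Lovelock equation for the closed FRW
  metric (k = 1), evaluated with a, its first and second derivatives at a time.\<close>
definition pressure_lhs :: "nat \<Rightarrow> nat \<Rightarrow> (nat \<Rightarrow> real) \<Rightarrow> real \<Rightarrow> real \<Rightarrow> real \<Rightarrow> real" where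
  "pressure_lhs N n \<alpha> a a' a'' =
     (let H = a'^2 / a^2 + 1 / a^2 in
      - (real N - 2) * ((real N - 3) / 2 * H + a'' / a)
      + (\<Sum>i=2..n. \<alpha> i * (lk11 N i * H ^ i + lk12 N i * (a'' / a) * H ^ (i - 1))))"

end

theory Submission
  imports Defs
begin

(* For a(t) = cosh(s t)/s both (a'^2 + 1)/a^2 and a''/a are identically C = s^2, so the i-th
   Lovelock term reduces to alpha_i C^i (k11 + k12). Pascal's rule and absorption for the
   binomial coefficients give 2 i (k11 + k12) = (N - 1) k12, hence the whole left-hand side
   equals (N - 1) C / 2 times the polynomial of which C is assumed to be a root. *)

lemma gbinomial_Suc_absorb:
  "of_nat (Suc k) * (a gchoose Suc k) = (a - of_nat k) * (a gchoose k)"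
  using gbinomial_absorption[of k a] gbinomial_absorb_comp[of a k] by simp

lemma binom_pascal: "binom (a + 1) b = binom a b + binom a (b - 1)"
proof (cases "b \<le> 0")
  case True
  then show ?thesis by (auto simp: binom_def)
next
  case False
  then obtain k where "b = int (Suc k)" by (metis gr0_implies_Suc not_le zero_less_imp_eq_int)
  then have "nat b = Suc k" and "nat (b - 1) = k" by simp_all
  with False show ?thesis using gbinomial_Suc_Suc[of "of_int a" k] by (simp add: binom_def ac_simps)
qed

lemma binom_absorb: "of_int b * binom a b = of_int (a - b + 1) * binom a (b - 1)"
proof (cases "b \<le> 0")
  case True
  then show ?thesis by (auto simp: binom_def)
next
  case False
  then obtain k where k: "b = int (Suc k)" by (metis gr0_implies_Suc not_le zero_less_imp_eq_int)
  then have "nat b = Suc k" and "nat (b - 1) = k" and "real_of_int (a - b + 1) = of_int a - of_nat k"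
    by simp_all
  with False show ?thesis using gbinomial_Suc_absorb[of k "real_of_int a"]
    by (simp add: binom_def k)
qed

lemma lk11_plus_lk12: "2 * real i * (lk11 N i + lk12 N i) = (real N - 1) * lk12 N i"
proof -
  define c :: real where "c = - (1/2) * fact (2*(i-1))"
  define X where "X = binom (int N - 3) (2 * (int i - 1))"
  define Z where "Z = binom (int N - 3) (2 * int i - 3)"
  define A where "A = (real N - 2) * (real N - 1 - 2 * real i) * X"
  define B where "B = 2 * (real N - real i - 1) * (X + Z) + (real N - 2) * (real N - 1 - 2 * real i) * Z"
  have "2 * (int i - 1) - 1 = 2 * int i - 3" by simp
  then have pascal: "binom (int N - 2) (2 * (int i - 1)) = X + Z"
    and absorb: "(2 * real i - 2) * X = (real N - 2 * real i) * Z"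
    using binom_pascal[of "int N - 3" "2 * (int i - 1)"] binom_absorb[of "2 * (int i - 1)" "int N - 3"]
    by (simp_all add: X_def Z_def algebra_simps)
  have lk: "lk11 N i = c * A" "lk12 N i = c * B"
    unfolding lk11_def lk12_def pascal X_def[symmetric] Z_def[symmetric] c_def A_def B_def
    by (simp_all only: mult.assoc)
  have "2 * real i * (A + B) - (real N - 1) * B
      = (real N - 1 - 2 * real i) * (real N - 1) * ((2 * real i - 2) * X - (real N - 2 * real i) * Z)"
    by (simp add: A_def B_def algebra_simps)
  also have "\<dots> = 0" using absorb by simp
  finally have "c * (2 * real i * (A + B)) = c * ((real N - 1) * B)" by simp
  then show ?thesis unfolding lk by (simp add: algebra_simps)
qed

lemma pressure_lhs_at_constant_rates:
  assumes "a'^2 / a^2 + 1 / a^2 = C" and "a'' / a = C"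
  shows "pressure_lhs N n \<alpha> a a' a'' =
    (real N - 1) * C / 2 * (2 - real N + (\<Sum>i=2..n. \<alpha> i * lk12 N i * C ^ (i - 1) / real i))"
proof -
  have term_eq: "\<alpha> i * (lk11 N i * C ^ i + lk12 N i * C * C ^ (i - 1))
      = (real N - 1) * C / 2 * (\<alpha> i * lk12 N i * C ^ (i - 1) / real i)" if "i \<in> {2..n}" for i
  proof -
    from that have "i \<noteq> 0" by simp
    then have "C ^ i = C * C ^ (i - 1)" by (simp add: power_eq_if)
    then have "\<alpha> i * (lk11 N i * C ^ i + lk12 N i * C * C ^ (i - 1))
        = \<alpha> i * C * C ^ (i - 1) * (lk11 N i + lk12 N i)"
      by (simp add: algebra_simps)
    also have "lk11 N i + lk12 N i = (real N - 1) * lk12 N i / (2 * real i)"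
      using lk11_plus_lk12[of i N] \<open>i \<noteq> 0\<close> by (simp add: eq_divide_eq algebra_simps)
    finally show ?thesis by (simp add: field_simps)
  qed
  have sum_eq: "(\<Sum>i=2..n. \<alpha> i * (lk11 N i * C ^ i + lk12 N i * C * C ^ (i - 1)))
      = (real N - 1) * C / 2 * (\<Sum>i=2..n. \<alpha> i * lk12 N i * C ^ (i - 1) / real i)"
    unfolding sum_distrib_left by (rule sum.cong[OF refl term_eq])
  have "- (real N - 2) * ((real N - 3) / 2 * C + C) = (real N - 1) * C / 2 * (2 - real N)"
    by (simp add: field_simps)
  then show ?thesis
    unfolding pressure_lhs_def Let_def assms sum_eq by (simp only: distrib_left)
qed

lemma deriv_cosh_scaled: "(s::real) \<noteq> 0 \<Longrightarrow> deriv (\<lambda>t. cosh (s * t) / s) = (\<lambda>t. sinh (s * t))"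
proof
  fix t assume "s \<noteq> 0"
  have "((\<lambda>t. cosh (s * t) / s) has_real_derivative sinh (s * t) * s / s) (at t)"
    by (auto intro!: derivative_eq_intros)
  with \<open>s \<noteq> 0\<close> show "deriv (\<lambda>t. cosh (s * t) / s) t = sinh (s * t)"
    using DERIV_imp_deriv by fastforce
qed

lemma deriv_sinh_scaled: "deriv (\<lambda>t. sinh ((s::real) * t)) = (\<lambda>t. s * cosh (s * t))"
proof
  fix t
  have "((\<lambda>t. sinh (s * t)) has_real_derivative cosh (s * t) * s) (at t)"
    by (auto intro!: derivative_eq_intros)
  then show "deriv (\<lambda>t. sinh (s * t)) t = s * cosh (s * t)"
    using DERIV_imp_deriv by (metis mult.commute)
qed

lemma cosh_scale_factor_rates:
  fixes s :: real
  assumes "s \<noteq> 0" and a: "a = (\<lambda>t. cosh (s * t) / s)"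
  shows "(deriv a t)^2 / (a t)^2 + 1 / (a t)^2 = s^2" and "deriv (deriv a) t / a t = s^2"
proof -
  have da: "deriv a = (\<lambda>t. sinh (s * t))"
    using deriv_cosh_scaled[OF \<open>s \<noteq> 0\<close>] a by simp
  have "(deriv a t)^2 / (a t)^2 + 1 / (a t)^2 = s^2 * ((sinh (s * t))^2 + 1) / (cosh (s * t))^2"
    unfolding da using \<open>s \<noteq> 0\<close> by (simp add: a field_simps)
  also have "\<dots> = s^2" by (simp flip: cosh_square_eq)
  finally show "(deriv a t)^2 / (a t)^2 + 1 / (a t)^2 = s^2" .
  show "deriv (deriv a) t / a t = s^2"
    unfolding da deriv_sinh_scaled using \<open>s \<noteq> 0\<close> by (simp add: a power2_eq_square)
qed

(* The coefficient identity holds for all i and N, so the bounds on n and N are not needed;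
   alpha 1 = 1 is already built into pressure_lhs. *)
theorem mainTheorem5:
  fixes n N :: nat and \<alpha> :: "nat \<Rightarrow> real" and C1 :: real and a :: "real \<Rightarrow> real"
  assumes "n \<ge> 2" and "N \<ge> 2 * n + 1" and "\<alpha> 1 = 1"
    and "C1 > 0"
    and "2 - real N + (\<Sum>i=2..n. \<alpha> i * lk12 N i * C1 ^ (i - 1) / real i) = 0"
    and "a = (\<lambda>t. cosh (sqrt C1 * t) / sqrt C1)"
  shows "\<forall>t. pressure_lhs N n \<alpha> (a t) (deriv a t) (deriv (deriv a) t) = 0"
proof
  fix t
  have "sqrt C1 \<noteq> 0" and C1: "(sqrt C1)^2 = C1" using \<open>C1 > 0\<close> by simp_all
  from cosh_scale_factor_rates[OF this(1) \<open>a = _\<close>, unfolded C1]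
  have "(deriv a t)^2 / (a t)^2 + 1 / (a t)^2 = C1" and "deriv (deriv a) t / a t = C1" .
  from pressure_lhs_at_constant_rates[OF this, where N = N and n = n and \<alpha> = \<alpha>,
      unfolded \<open>2 - real N + _ = 0\<close> mult_zero_right]
  show "pressure_lhs N n \<alpha> (a t) (deriv a t) (deriv (deriv a) t) = 0" .
qed

end
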